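(* Let $\mathcal{X}\subseteq\mathbb{R}^d$ be nonempty closed convex with $\mathbf{0}\in\mathcal{X}$ and diameter at most $D$, let $f_1,\dots,f_T:\mathcal{X}\to\mathbb{R}$ be convex differentiable with $\max_{\mathbf{x}\in\mathcal{X}}\|\nabla f_t(\mathbf{x})\|_2\le G$, and let $\Phi_t:\mathcal{X}\to\mathcal{X}$ satisfy $\|\Phi_t(\mathbf{x})-\Phi_t(\mathbf{x}')\|_2\le\|\mathbf{x}-\mathbf{x}'\|_2$ for all $t\in[T]$, $\mathbf{x},\mathbf{x}'\in\mathcal{X}$. Consider $\mathbf{x}_1\in\mathcal{X}$ and, for $t\ge1$, $\bar{\mathbf{x}}_{t+1}=\Pi_{\mathcal{X}}[\mathbf{x}_t-\eta\nabla f_t(\mathbf{x}_t)]$, $\mathbf{x}_{t+1}=\Phi_t(\bar{\mathbf{x}}_{t+1})$, with $\eta>0$. Then for any $\mathbf{u}_1,\dots,\mathbf{u}_{T+1}\in\mathcal{X}$, \[ \sum_{t=1}^T f_t(\mathbf{x}_t)-\sum_{t=1}^T f_t(\mathbf{u}_t)\le\frac{D^2}{2\eta}+\frac D\eta\sum_{t=1}^T\|\mathbf{u}_{t+1}-\Phi_t(\mathbf{u}_t)\|_2+\frac{\eta TG^2}{2}. \]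
   Context: $\Pi_{\mathcal{X}}$ is Euclidean projection onto $\mathcal{X}$; $f_t$ is revealed after $\mathbf{x}_t$ is played, and the maps $\Phi_t$ are given to the learner. *)

theory Defs
  imports "HOL-Analysis.Analysis"
begin

end

theory Submission imports Defs "HOL-Analysis.Analysis" begin

text \<open>Use the squared distance \<open>\<parallel>x t - u t\<parallel>\<^sup>2\<close> as a potential. The gradient inequality for the
  convex \<open>f t\<close>, together with the fact that projecting onto \<open>X\<close> does not increase the distance to
  \<open>u t \<in> X\<close>, bounds \<open>f t (x t) - f t (u t)\<close> by the drop of the potential from \<open>x t\<close> to the projected
  point \<open>w\<close>, divided by \<open>2\<eta>\<close>, plus \<open>\<eta>G\<^sup>2/2\<close>. Since \<open>\<Phi> t\<close> is nonexpansive, \<open>\<parallel>x (t+1) - u (t+1)\<parallel>\<close>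
  exceeds \<open>\<parallel>w - u t\<parallel>\<close> by at most \<open>\<parallel>u (t+1) - \<Phi> t (u t)\<parallel>\<close>; as both distances are at most \<open>D\<close>,
  the squares differ by at most \<open>2D\<parallel>u (t+1) - \<Phi> t (u t)\<parallel>\<close>. Summing over \<open>t\<close>, the potential
  telescopes to at most \<open>D\<^sup>2\<close>.\<close>

lemma convex_on_gradient_le:
  fixes X :: "'a::real_inner set" and F :: "'a \<Rightarrow> real"
  assumes "convex X" and F_convex: "convex_on X F"
    and F_deriv: "(F has_derivative (\<lambda>h. c \<bullet> h)) (at y within X)"
    and y: "y \<in> X" and v: "v \<in> X"
  shows "F y - F v \<le> c \<bullet> (y - v)"
proof -
  define p where "p s = (1 - s) *\<^sub>R y + s *\<^sub>R v" for s :: real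
  have p_in: "p ` {0..1} \<subseteq> X"
    using convexD_alt[OF \<open>convex X\<close> y v] by (auto simp: p_def)
  have "(p has_derivative (\<lambda>s. s *\<^sub>R (v - y))) (at 0 within {0..1})"
    unfolding p_def by (auto intro!: derivative_eq_intros simp: algebra_simps)
  moreover have "(F has_derivative (\<lambda>h. c \<bullet> h)) (at (p 0) within p ` {0..1})"
    using has_derivative_subset[OF F_deriv p_in] by (simp add: p_def)
  ultimately have "((F \<circ> p) has_derivative (\<lambda>s. s * (c \<bullet> (v - y)))) (at 0 within {0..1})"
    using diff_chain_within by (fastforce simp: o_def)
  then have "((F \<circ> p) has_field_derivative c \<bullet> (v - y)) (at 0 within {0..1})"
    by (simp add: has_field_derivative_def mult.commute[of _ "c \<bullet> (v - y)"])
  then have "((\<lambda>s. (F (p s) - F y) / s) \<longlongrightarrow> c \<bullet> (v - y)) (at 0 within {0..1})"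
    by (simp add: has_field_derivative_iff p_def)
  then have lim: "((\<lambda>s. (F (p s) - F y) / s) \<longlongrightarrow> c \<bullet> (v - y)) (at 0 within {0<..<1})"
    by (rule tendsto_mono[rotated]) (auto intro: at_le)
  \<comment> \<open>convexity bounds the difference quotients along the segment by the secant slope\<close>
  have "eventually (\<lambda>s. (F (p s) - F y) / s \<le> F v - F y) (at 0 within {0<..<1})"
    unfolding eventually_at_filter
  proof (intro always_eventually allI impI)
    fix s :: real assume s: "s \<in> {0<..<1}"
    then have "F (p s) \<le> (1 - s) * F y + s * F v"
      using convex_onD[OF F_convex, of s y v] y v by (auto simp: p_def)
    with s show "(F (p s) - F y) / s \<le> F v - F y"
      by (simp add: divide_simps algebra_simps)
  qed
  moreover have "at (0::real) within {0<..<1} \<noteq> bot"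
    by (subst at_within_eq_bot_iff) auto
  ultimately have "c \<bullet> (v - y) \<le> F v - F y"
    using tendsto_upperbound[OF lim] by blast
  then show ?thesis
    by (simp add: inner_diff_right)
qed

lemma projected_gradient_step:
  fixes X :: "'a::{real_inner,heine_borel} set"
  assumes "convex X" "closed X" "X \<noteq> {}" and v: "v \<in> X"
  shows "2 * \<eta> * (c \<bullet> (y - v))
           \<le> (norm (y - v))\<^sup>2 - (norm (closest_point X (y - \<eta> *\<^sub>R c) - v))\<^sup>2 + \<eta>\<^sup>2 * (norm c)\<^sup>2"
proof -
  have "norm (closest_point X (y - \<eta> *\<^sub>R c) - v) \<le> norm (y - \<eta> *\<^sub>R c - v)"
    using closest_point_lipschitz[OF assms(1-3), of "y - \<eta> *\<^sub>R c" v]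
    by (simp add: dist_norm closest_point_self[OF v])
  then have "(norm (closest_point X (y - \<eta> *\<^sub>R c) - v))\<^sup>2 \<le> (norm (y - \<eta> *\<^sub>R c - v))\<^sup>2"
    by (simp add: power_mono)
  also have "\<dots> = (norm (y - v))\<^sup>2 - 2 * \<eta> * (c \<bullet> (y - v)) + \<eta>\<^sup>2 * (norm c)\<^sup>2"
    unfolding power2_norm_eq_inner by (simp add: algebra_simps inner_commute power2_eq_square)
  finally show ?thesis
    by linarith
qed

lemma power2_diff_le_of_le_add:
  fixes a b e D :: real
  assumes "0 \<le> a" "0 \<le> b" "0 \<le> e" "a \<le> D" "b \<le> D" "a \<le> b + e"
  shows "a\<^sup>2 - b\<^sup>2 \<le> 2 * D * e"
proof (cases "a \<le> b")
  case True
  then have "a\<^sup>2 \<le> b\<^sup>2"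
    using \<open>0 \<le> a\<close> by (rule power_mono)
  moreover have "0 \<le> 2 * D * e"
    using assms by (intro mult_nonneg_nonneg) auto
  ultimately show ?thesis
    by simp
next
  case False
  have "a\<^sup>2 - b\<^sup>2 = (a - b) * (a + b)"
    by (simp add: power2_eq_square algebra_simps)
  also have "\<dots> \<le> e * (2 * D)"
    using False assms by (intro mult_mono) auto
  finally show ?thesis
    by (simp add: mult_ac)
qed

lemma projected_gradient_map_step:
  fixes X :: "'a::{real_inner,heine_borel} set" and F :: "'a \<Rightarrow> real"
  assumes X: "convex X" "closed X" "X \<noteq> {}"
    and X_diam: "\<forall>y\<in>X. \<forall>z\<in>X. norm (y - z) \<le> D"
    and F_convex: "convex_on X F"
    and F_deriv: "(F has_derivative (\<lambda>h. c \<bullet> h)) (at y within X)"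
    and c_bound: "norm c \<le> G"
    and P_maps: "\<forall>z\<in>X. P z \<in> X"
    and P_nonexp: "\<forall>z\<in>X. \<forall>z'\<in>X. norm (P z - P z') \<le> norm (z - z')"
    and \<eta>_pos: "\<eta> > 0"
    and y: "y \<in> X" and v: "v \<in> X" and v': "v' \<in> X"
  shows "F y - F v
           \<le> ((norm (y - v))\<^sup>2 - (norm (P (closest_point X (y - \<eta> *\<^sub>R c)) - v'))\<^sup>2) / (2 * \<eta>)
             + (D / \<eta>) * norm (v' - P v) + \<eta> * G\<^sup>2 / 2"
proof -
  define w where "w = closest_point X (y - \<eta> *\<^sub>R c)"
  have w: "w \<in> X"
    unfolding w_def using closest_point_in_set[OF X(2,3)] .
  have "norm (P w - v') \<le> norm (P w - P v) + norm (v' - P v)"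
    using norm_triangle_ineq[of "P w - P v" "P v - v'"] by (simp add: norm_minus_commute)
  also have "\<dots> \<le> norm (w - v) + norm (v' - P v)"
    using P_nonexp w v by simp
  finally have "(norm (P w - v'))\<^sup>2 - (norm (w - v))\<^sup>2 \<le> 2 * D * norm (v' - P v)"
    using X_diam P_maps w v v' by (intro power2_diff_le_of_le_add) auto
  moreover have "2 * \<eta> * (F y - F v) \<le> 2 * \<eta> * (c \<bullet> (y - v))"
    using convex_on_gradient_le[OF X(1) F_convex F_deriv y v] \<eta>_pos by simp
  moreover have "\<eta>\<^sup>2 * (norm c)\<^sup>2 \<le> \<eta>\<^sup>2 * G\<^sup>2"
    using c_bound by (intro mult_left_mono power_mono) auto
  ultimately have "2 * \<eta> * (F y - F v)
      \<le> (norm (y - v))\<^sup>2 - (norm (P w - v'))\<^sup>2 + 2 * D * norm (v' - P v) + \<eta>\<^sup>2 * G\<^sup>2"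
    using projected_gradient_step[OF X v, of \<eta> c y] unfolding w_def by linarith
  then show ?thesis
    using \<eta>_pos unfolding w_def by (simp add: field_simps power2_eq_square)
qed

lemma sum_le_telescoping:
  fixes a b \<phi> :: "nat \<Rightarrow> real"
  assumes "\<And>t. t \<in> {1..T} \<Longrightarrow> a t \<le> \<phi> t - \<phi> (t + 1) + b t" and "0 \<le> \<phi> (T + 1)"
  shows "(\<Sum>t=1..T. a t) \<le> \<phi> 1 + (\<Sum>t=1..T. b t)"
proof -
  have "(\<Sum>t=1..T. a t) \<le> (\<Sum>t=1..T. \<phi> t - \<phi> (t + 1)) + (\<Sum>t=1..T. b t)"
    using sum_mono[of "{1..T}", OF assms(1)] by (simp add: sum.distrib)
  also have "(\<Sum>t=1..T. \<phi> t - \<phi> (t + 1)) = - (\<Sum>t=1..T. \<phi> (Suc t) - \<phi> t)"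
    by (simp add: sum_negf[symmetric])
  also have "\<dots> = \<phi> 1 - \<phi> (T + 1)"
    using sum_Suc_diff[of 1 T \<phi>] by simp
  finally show ?thesis
    using assms(2) by simp
qed

theorem theorem6:
  fixes X :: "'a::euclidean_space set"
    and D G \<eta> :: real and T :: nat
    and f :: "nat \<Rightarrow> 'a \<Rightarrow> real"
    and g :: "nat \<Rightarrow> 'a \<Rightarrow> 'a"
    and \<Phi> :: "nat \<Rightarrow> 'a \<Rightarrow> 'a"
    and x u :: "nat \<Rightarrow> 'a"
  assumes X_ne: "X \<noteq> {}" and X_closed: "closed X" and X_convex: "convex X"
    and X_0: "0 \<in> X"
    and X_diam: "\<forall>y\<in>X. \<forall>z\<in>X. norm (y - z) \<le> D"
    and f_convex: "\<forall>t\<in>{1..T}. convex_on X (f t)"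
    and f_grad: "\<forall>t\<in>{1..T}. \<forall>y\<in>X. (f t has_derivative (\<lambda>h. g t y \<bullet> h)) (at y within X)"
    and G_bound: "\<forall>t\<in>{1..T}. \<forall>y\<in>X. norm (g t y) \<le> G"
    and \<Phi>_maps: "\<forall>t\<in>{1..T}. \<forall>y\<in>X. \<Phi> t y \<in> X"
    and \<Phi>_nonexp: "\<forall>t\<in>{1..T}. \<forall>y\<in>X. \<forall>z\<in>X. norm (\<Phi> t y - \<Phi> t z) \<le> norm (y - z)"
    and \<eta>_pos: "\<eta> > 0"
    and x1: "x 1 \<in> X"
    and x_step: "\<forall>t\<in>{1..T}. x (t + 1) = \<Phi> t (closest_point X (x t - \<eta> *\<^sub>R g t (x t)))"
    and u_in: "\<forall>t\<in>{1..T+1}. u t \<in> X"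
  shows "(\<Sum>t=1..T. f t (x t)) - (\<Sum>t=1..T. f t (u t))
         \<le> D\<^sup>2 / (2 * \<eta>) + (D / \<eta>) * (\<Sum>t=1..T. norm (u (t + 1) - \<Phi> t (u t)))
           + \<eta> * real T * G\<^sup>2 / 2"
proof -
  have x_in: "x t \<in> X" if "t \<in> {1..T+1}" for t
  proof (cases "t = 1")
    case False
    with that obtain s where t: "t = Suc s" and s: "s \<in> {1..T}"
      by (cases t) auto
    show ?thesis
      using x_step \<Phi>_maps s closest_point_in_set[OF X_closed X_ne] by (simp add: t)
  qed (use x1 in simp)
  define \<phi> where "\<phi> t = (norm (x t - u t))\<^sup>2 / (2 * \<eta>)" for t
  define e where "e t = norm (u (t + 1) - \<Phi> t (u t))" for t
  have "(\<Sum>t=1..T. f t (x t) - f t (u t)) \<le> \<phi> 1 + (\<Sum>t=1..T. (D / \<eta>) * e t + \<eta> * G\<^sup>2 / 2)"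
  proof (rule sum_le_telescoping)
    fix t assume t: "t \<in> {1..T}"
    have "f t (x t) - f t (u t)
        \<le> ((norm (x t - u t))\<^sup>2 - (norm (x (t + 1) - u (t + 1)))\<^sup>2) / (2 * \<eta>) + (D / \<eta>) * e t + \<eta> * G\<^sup>2 / 2"
      unfolding e_def x_step[rule_format, OF t]
      using t f_convex f_grad G_bound \<Phi>_maps \<Phi>_nonexp x_in u_in
      by (intro projected_gradient_map_step[OF X_convex X_closed X_ne X_diam _ _ _ _ _ \<eta>_pos]) auto
    then show "f t (x t) - f t (u t) \<le> \<phi> t - \<phi> (t + 1) + ((D / \<eta>) * e t + \<eta> * G\<^sup>2 / 2)"
      by (simp add: \<phi>_def diff_divide_distrib)
  qed (use \<eta>_pos in \<open>simp add: \<phi>_def\<close>)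
  moreover have "\<phi> 1 \<le> D\<^sup>2 / (2 * \<eta>)"
    using X_diam x1 u_in \<eta>_pos by (auto simp: \<phi>_def intro!: divide_right_mono power_mono)
  moreover have "(\<Sum>t=1..T. (D / \<eta>) * e t + \<eta> * G\<^sup>2 / 2) = (D / \<eta>) * (\<Sum>t=1..T. e t) + \<eta> * real T * G\<^sup>2 / 2"
    by (simp add: sum.distrib sum_distrib_left mult_ac)
  ultimately show ?thesis
    unfolding e_def sum_subtractf by linarith
qed

end
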